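(* Let $\mu\in\Lambda$ with $\operatorname{genus}(\mu)=\operatorname{genus}(\mathcal M)$. Then $F_\mu$ consists of a single point, and this point is a vertex of $V_0$. Conversely, every vertex $v$ of $V_0$ satisfies $\{v\}=F_\mu$ for some $\mu\in\Lambda$ with $\operatorname{genus}(\mu)=\operatorname{genus}(\mathcal M)$.
   Context: Let $\mathcal M$ be a regular matroid on a finite ground set $E$, represented by a totally unimodular matrix $M$; $\mathcal F=\ker M\subseteq\mathbb R^E$ with Euclidean inner product, $\Lambda=\ker M\cap\mathbb Z^E$, $\operatorname{genus}(\mathcal M)=\dim\mathcal F$, $V_0=\{x\in\mathcal F:\|x\|\le\|x-\lambda\|\ \forall\lambda\in\Lambda\}$. For $x\in\mathbb R^E$, $x_e$ is its $e$-coordinate and $\operatorname{supp}(x)=\{e:x_e\ne0\}$; for $\mu\in\Lambda$, $\operatorname{genus}(\mu)=\dim\ker M_\mu$, where $M_\mu$ is the submatrix of columns in $\operatorname{supp}\mu$. A circuit in $\Lambda$ is a flow with coordinates in $\{-1,0,1\}$ whose support is a circuit (minimal dependent set of columns) of $\mathcal M$; $\Xi$ is the set of these. For $\gamma\in\Xi$, $F_\gamma=\{x\in\mathcal F:2\langle x,\gamma\rangle=\|\gamma\|^2\}$. For $\mu\in\Lambda$, $F_\mu=\bigcap F_\gamma$, the intersection over all $\gamma\in\Xi$ with $\operatorname{supp}\gamma\subseteq\operatorname{supp}\mu$ and $\operatorname{sgn}\gamma_e=\operatorname{sgn}\mu_e$ for all $e\in\operatorname{supp}\gamma$. *)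

theory Defs
  imports "HOL-Analysis.Analysis"
begin

text \<open>Regular matroid on ground set E (a finite type 'e), represented by a real matrix
  M with rows indexed by a finite type 'r and columns indexed by 'e.\<close>

definition det_fun :: "nat \<Rightarrow> (nat \<Rightarrow> nat \<Rightarrow> real) \<Rightarrow> real" where
  "det_fun k A = (\<Sum>p | p permutes {..<k}. of_int (sign p) * (\<Prod>i<k. A i (p i)))"

definition totally_unimodular :: "real^'e^'r \<Rightarrow> bool" where
  "totally_unimodular M \<longleftrightarrow>
     (\<forall>(rs :: 'r list) (cs :: 'e list). distinct rs \<longrightarrow> distinct cs \<longrightarrow> length rs = length cs \<longrightarrow>
        det_fun (length rs) (\<lambda>i j. M $ (rs ! i) $ (cs ! j)) \<in> {-1, 0, 1})"

definition supp :: "real^'e \<Rightarrow> 'e set" where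
  "supp x = {e. x $ e \<noteq> 0}"

definition flows :: "real^'e^'r \<Rightarrow> (real^'e) set" where
  "flows M = {x. M *v x = 0}"

definition int_flows :: "real^'e^'r \<Rightarrow> (real^'e) set" where
  "int_flows M = {x \<in> flows M. \<forall>e. x $ e \<in> \<int>}"

definition genus_matroid :: "real^'e^'r \<Rightarrow> nat" where
  "genus_matroid M = dim (flows M)"

text \<open>genus of mu: dimension of the kernel of the column submatrix M_mu, i.e. of the
  space of vectors supported on supp mu that lie in ker M.\<close>
definition genus_flow :: "real^'e^'r \<Rightarrow> real^'e \<Rightarrow> nat" where
  "genus_flow M \<mu> = dim {x \<in> flows M. supp x \<subseteq> supp \<mu>}"

definition dependent_cols :: "real^'e^'r \<Rightarrow> 'e set \<Rightarrow> bool" where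
  "dependent_cols M D \<longleftrightarrow> (\<exists>x. x \<noteq> 0 \<and> M *v x = 0 \<and> supp x \<subseteq> D)"

definition matroid_circuit :: "real^'e^'r \<Rightarrow> 'e set \<Rightarrow> bool" where
  "matroid_circuit M C \<longleftrightarrow> dependent_cols M C \<and> (\<forall>D. D \<subset> C \<longrightarrow> \<not> dependent_cols M D)"

definition lattice_circuits :: "real^'e^'r \<Rightarrow> (real^'e) set" where
  "lattice_circuits M = {\<gamma> \<in> int_flows M. (\<forall>e. \<gamma> $ e \<in> {-1, 0, 1}) \<and> matroid_circuit M (supp \<gamma>)}"

definition voronoi0 :: "real^'e^'r \<Rightarrow> (real^'e) set" where
  "voronoi0 M = {x \<in> flows M. \<forall>l\<in>int_flows M. norm x \<le> norm (x - l)}"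

definition face_circ :: "real^'e^'r \<Rightarrow> real^'e \<Rightarrow> (real^'e) set" where
  "face_circ M \<gamma> = {x \<in> flows M. 2 * (x \<bullet> \<gamma>) = (norm \<gamma>)\<^sup>2}"

definition face_flow :: "real^'e^'r \<Rightarrow> real^'e \<Rightarrow> (real^'e) set" where
  "face_flow M \<mu> = flows M \<inter>
     \<Inter> {face_circ M \<gamma> | \<gamma>. \<gamma> \<in> lattice_circuits M \<and> supp \<gamma> \<subseteq> supp \<mu> \<and>
                              (\<forall>e\<in>supp \<gamma>. sgn (\<gamma> $ e) = sgn (\<mu> $ e))}"

end

theory Submission
  imports Defs "Jordan_Normal_Form.Determinant"
begin

text \<open>
  Total unimodularity gives every circuit a flow with entries in {-1, 0, 1}: its entries are
  cofactors of a nonsingular minor. Hence every flow y is a nonnegative combination of lattice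
  circuits conformal to y, so an inequality \<open>2 (x \<bullet> y) \<le> \<parallel>y\<parallel>\<^sub>1\<close> holds for all flows once it
  holds for circuits. Since \<open>\<parallel>\<gamma>\<parallel>\<^sup>2 = \<parallel>\<gamma>\<parallel>\<^sub>1\<close> for circuits and \<open>\<parallel>l\<parallel>\<^sub>1 \<le> \<parallel>l\<parallel>\<^sup>2\<close> for lattice points,
  \<open>V\<^sub>0\<close> is cut out by the circuit inequalities.

  If \<open>\<mu>\<close> has full genus, the projection of \<open>sgn \<mu> / 2\<close> onto the flow space lies in
  \<open>F\<^sub>\<mu> \<inter> V\<^sub>0\<close>. Two points of \<open>F\<^sub>\<mu>\<close> differ by a flow d orthogonal to all circuits conformal
  to \<open>\<mu>\<close>, hence to \<open>\<mu>\<close> and to \<open>N \<mu> + d\<close> (conformal to \<open>\<mu>\<close> for large N), hence to itself.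
  So \<open>F\<^sub>\<mu>\<close> is a point, and a vertex since the \<open>F\<^sub>\<gamma>\<close> support \<open>V\<^sub>0\<close>.

  Conversely, at a vertex v the tight circuits span the flow space. Two tight circuits never
  have opposite signs in a coordinate, for then their sum y would violate
  \<open>2 (v \<bullet> y) \<le> \<parallel>y\<parallel>\<^sub>1\<close>. So their sum \<open>\<mu>\<close> is conformal to each of them, every circuit
  conformal to \<open>\<mu>\<close> is tight, \<open>\<mu>\<close> has full support, and \<open>F\<^sub>\<mu> = {v}\<close>.
\<close>

no_notation vec_index (infixl "$" 100)
no_notation scalar_prod (infix "\<bullet>" 70)

lemma det_fun_eq_det: "det_fun k A = Determinant.det (mat k k (\<lambda>(i, j). A i j))"
  unfolding det_fun_def Determinant.det_def by (simp add: atLeast0LessThan)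

lemma det_fun_cong:
  "(\<And>i j. i < k \<Longrightarrow> j < k \<Longrightarrow> A i j = B i j) \<Longrightarrow> det_fun k A = det_fun k B"
  unfolding det_fun_eq_det by (intro arg_cong[of _ _ Determinant.det] eq_matI) auto

lemma det_fun_identical_rows:
  assumes "i < k" "i' < k" "i \<noteq> i'" "\<And>j. j < k \<Longrightarrow> A i j = A i' j"
  shows "det_fun k A = 0"
  unfolding det_fun_eq_det
  by (rule det_identical_rows[of _ k i i']) (use assms in \<open>auto intro!: eq_vecI\<close>)

lemma det_fun_eq_0_if_kernel:
  assumes "j0 < k" "x j0 \<noteq> 0" "\<And>i. i < k \<Longrightarrow> (\<Sum>j<k. A i j * x j) = 0"
  shows "det_fun k A = 0"
  unfolding det_fun_eq_det
proof (subst det_0_iff_vec_prod_zero[of _ k], simp, intro exI[of _ "Matrix.vec k x"] conjI)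
  show "Matrix.vec k x \<noteq> 0\<^sub>v k"
    using assms(1,2) by (metis index_vec index_zero_vec(1))
  show "mat k k (\<lambda>(i, j). A i j) *\<^sub>v Matrix.vec k x = 0\<^sub>v k"
    using assms(3) by (intro eq_vecI) (auto simp: mult_mat_vec_def scalar_prod_def atLeast0LessThan)
qed simp

lemma det_fun_expand_last_row:
  "det_fun (Suc n) A =
     (\<Sum>j<Suc n. A n j * ((-1) ^ (n + j) * det_fun n (\<lambda>i k. A i (if k < j then k else Suc k))))"
  unfolding det_fun_eq_det
  by (subst laplace_expansion_row[of _ "Suc n" n], simp, simp, rule sum.cong, simp)
     (simp add: Determinant.cofactor_def mat_delete_def,
      rule disjI2, rule arg_cong[of _ _ Determinant.det], rule eq_matI, auto)

definition minor :: "real^'e^'r \<Rightarrow> 'r list \<Rightarrow> 'e list \<Rightarrow> real" where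
  "minor M rs cs = det_fun (length rs) (\<lambda>i j. M $ (rs ! i) $ (cs ! j))"

definition drop_nth :: "nat \<Rightarrow> 'a list \<Rightarrow> 'a list" where
  "drop_nth j xs = take j xs @ drop (Suc j) xs"

text \<open>The cofactor of entry \<open>(length rs, j)\<close> of the square matrix with rows \<open>rs @ [r]\<close> and
  columns cs; it does not depend on r.\<close>

definition last_row_cofactor :: "real^'e^'r \<Rightarrow> 'r list \<Rightarrow> 'e list \<Rightarrow> nat \<Rightarrow> real" where
  "last_row_cofactor M rs cs j = (-1) ^ (length rs + j) * minor M rs (drop_nth j cs)"

lemma nth_drop_nth:
  "j < length xs \<Longrightarrow> k < length xs - 1 \<Longrightarrow> drop_nth j xs ! k = xs ! (if k < j then k else Suc k)"
  by (auto simp: drop_nth_def nth_append min_def)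

lemma length_drop_nth: "j < length xs \<Longrightarrow> length (drop_nth j xs) = length xs - 1"
  by (auto simp: drop_nth_def)

lemma distinct_drop_nth: "distinct xs \<Longrightarrow> distinct (drop_nth j xs)"
  unfolding drop_nth_def by (simp add: set_take_disj_set_drop_if_distinct)

lemma minor_append_row:
  assumes "length cs = Suc (length rs)"
  shows "minor M (rs @ [r]) cs = (\<Sum>j<length cs. M $ r $ (cs ! j) * last_row_cofactor M rs cs j)"
proof -
  have "minor M rs (drop_nth j cs) =
        det_fun (length rs) (\<lambda>i k. M $ ((rs @ [r]) ! i) $ (cs ! (if k < j then k else Suc k)))"
    if "j < length cs" for j
    unfolding minor_def using that assms by (intro det_fun_cong) (simp add: nth_drop_nth nth_append)
  then show ?thesis
    using assms by (simp add: minor_def last_row_cofactor_def det_fun_expand_last_row)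
qed

lemma last_row_cofactor_last:
  "length rs = length cs \<Longrightarrow> last_row_cofactor M rs (cs @ [c]) (length cs) = minor M rs cs"
  by (simp add: last_row_cofactor_def drop_nth_def)

lemma minor_unimodular:
  "totally_unimodular M \<Longrightarrow> distinct rs \<Longrightarrow> distinct cs \<Longrightarrow> length rs = length cs \<Longrightarrow>
   minor M rs cs \<in> {-1, 0, 1}"
  unfolding totally_unimodular_def minor_def by blast

lemma last_row_cofactor_unimodular:
  assumes "totally_unimodular M" "distinct rs" "distinct cs" "length cs = Suc (length rs)"
    and "j < length cs"
  shows "last_row_cofactor M rs cs j \<in> {-1, 0, 1}"
proof -
  have "minor M rs (drop_nth j cs) \<in> {-1, 0, 1}"
    using assms by (intro minor_unimodular distinct_drop_nth) (auto simp: length_drop_nth)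
  moreover have "(-1::real) ^ (length rs + j) \<in> {-1, 1}"
    by (cases "even (length rs + j)") auto
  ultimately show ?thesis
    unfolding last_row_cofactor_def by auto
qed

lemma minor_repeated_row:
  assumes "r \<in> set rs" "length cs = Suc (length rs)"
  shows "minor M (rs @ [r]) cs = 0"
proof -
  obtain i where "i < length rs" "rs ! i = r"
    using assms(1) by (metis in_set_conv_nth)
  then show ?thesis
    unfolding minor_def
    by (intro det_fun_identical_rows[of i _ "length rs"]) (auto simp: nth_append)
qed

lemma subspace_flows: "subspace (flows M)"
  unfolding flows_def subspace_def
  by (auto simp: matrix_vector_right_distrib matrix_vector_mult_scaleR)

lemmas flows_add = subspace_add[OF subspace_flows]
  and flows_diff = subspace_diff[OF subspace_flows]
  and flows_scale = subspace_scale[OF subspace_flows]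

lemma supp_eq_empty_iff: "supp u = {} \<longleftrightarrow> u = 0"
  by (auto simp: supp_def Finite_Cartesian_Product.vec_eq_iff)

lemma circuit_flow_supp_eq:
  assumes "matroid_circuit M C" "u \<in> flows M" "supp u \<subseteq> C" "u \<noteq> 0"
  shows "supp u = C"
  using assms unfolding matroid_circuit_def dependent_cols_def flows_def by blast

lemma circuit_nonempty: "matroid_circuit M C \<Longrightarrow> C \<noteq> {}"
  unfolding matroid_circuit_def dependent_cols_def using supp_eq_empty_iff by blast

lemma circuit_has_flow:
  assumes "matroid_circuit M C"
  obtains z where "z \<in> flows M" "supp z = C"
proof -
  obtain z where "z \<noteq> 0" "z \<in> flows M" "supp z \<subseteq> C"
    using assms unfolding matroid_circuit_def dependent_cols_def flows_def by blast
  then show thesis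
    using that circuit_flow_supp_eq[OF assms] by blast
qed

definition coeff_vec :: "'e list \<Rightarrow> (nat \<Rightarrow> real) \<Rightarrow> real^'e::finite" where
  "coeff_vec cs x = (\<chi> e. \<Sum>j<length cs. if cs ! j = e then x j else 0)"

lemma coeff_vec_nth: "distinct cs \<Longrightarrow> j < length cs \<Longrightarrow> coeff_vec cs x $ (cs ! j) = x j"
proof -
  assume "distinct cs" "j < length cs"
  then have "coeff_vec cs x $ (cs ! j) = (\<Sum>k<length cs. if k = j then x k else 0)"
    unfolding coeff_vec_def vec_lambda_beta by (intro sum.cong) (auto simp: nth_eq_iff_index_eq)
  then show ?thesis
    using \<open>j < length cs\<close> by simp
qed

lemma coeff_vec_outside: "e \<notin> set cs \<Longrightarrow> coeff_vec cs x $ e = 0"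
  unfolding coeff_vec_def by (auto intro!: sum.neutral)

lemma coeff_vec_component_in:
  assumes "distinct cs" "\<And>j. j < length cs \<Longrightarrow> x j \<in> A" "0 \<in> A"
  shows "coeff_vec cs x $ e \<in> A"
proof (cases "e \<in> set cs")
  case True
  then obtain j where "j < length cs" "cs ! j = e"
    by (meson in_set_conv_nth)
  then show ?thesis
    using assms coeff_vec_nth by metis
qed (simp add: assms(3) coeff_vec_outside)

lemma supp_coeff_vec: "supp (coeff_vec cs x) \<subseteq> set cs"
  using coeff_vec_outside by (fastforce simp: supp_def)

lemma matrix_vector_mult_coeff_vec:
  "(M *v coeff_vec cs x) $ r = (\<Sum>j<length cs. M $ r $ (cs ! j) * x j)"
proof -
  have "(M *v coeff_vec cs x) $ r =
        (\<Sum>j<length cs. \<Sum>e\<in>UNIV. M $ r $ e * (if cs ! j = e then x j else 0))"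
    unfolding matrix_vector_mult_def coeff_vec_def
    by (simp add: sum_distrib_left, rule sum.swap)
  also have "\<dots> = (\<Sum>j<length cs. M $ r $ (cs ! j) * x j)"
    by (simp add: if_distrib cong: if_cong)
  finally show ?thesis .
qed

lemma coeff_vec_components:
  assumes "distinct cs" "supp z \<subseteq> set cs"
  shows "coeff_vec cs (\<lambda>j. z $ (cs ! j)) = z"
proof (rule Finite_Cartesian_Product.vec_eq_iff[THEN iffD2], intro allI)
  fix e
  show "coeff_vec cs (\<lambda>j. z $ (cs ! j)) $ e = z $ e"
  proof (cases "e \<in> set cs")
    case True
    then obtain j where "j < length cs" "cs ! j = e"
      by (meson in_set_conv_nth)
    then show ?thesis
      using coeff_vec_nth[OF assms(1)] by auto
  next
    case False
    then show ?thesis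
      using assms(2) coeff_vec_outside[OF False] by (auto simp: supp_def)
  qed
qed

lemma minor_dependent_cols:
  assumes "distinct cs" "length rs = length cs"
    and "z \<in> flows M" "z \<noteq> 0" "supp z \<subseteq> set cs"
  shows "minor M rs cs = 0"
proof -
  obtain e where "e \<in> supp z"
    using assms(4) supp_eq_empty_iff by blast
  moreover obtain j0 where "j0 < length cs" "cs ! j0 = e"
    using \<open>e \<in> supp z\<close> assms(5) by (meson in_set_conv_nth subsetD)
  ultimately have j0: "j0 < length cs" "z $ (cs ! j0) \<noteq> 0"
    by (auto simp: supp_def)
  have "(\<Sum>j<length cs. M $ (rs ! i) $ (cs ! j) * z $ (cs ! j)) = (M *v z) $ (rs ! i)" for i
    using matrix_vector_mult_coeff_vec[of M cs "\<lambda>j. z $ (cs ! j)"]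
    unfolding coeff_vec_components[OF assms(1,5)] by simp
  then show ?thesis
    unfolding minor_def using assms(2,3) j0
    by (intro det_fun_eq_0_if_kernel[of j0]) (auto simp: flows_def)
qed

lemma matrix_vector_mult_cofactors:
  "length cs = Suc (length rs) \<Longrightarrow>
   (M *v coeff_vec cs (last_row_cofactor M rs cs)) $ r = minor M (rs @ [r]) cs"
  by (simp add: matrix_vector_mult_coeff_vec minor_append_row)

lemma exists_nonsingular_minor:
  assumes "distinct cs" "\<And>u. u \<in> flows M \<Longrightarrow> supp u \<subseteq> set cs \<Longrightarrow> u = 0"
  shows "\<exists>rs. distinct rs \<and> length rs = length cs \<and> minor M rs cs \<noteq> 0"
  using assms
proof (induction cs rule: rev_induct)
  case Nil
  then show ?case
    by (simp add: minor_def det_fun_def)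
next
  case (snoc c cs)
  obtain rs where rs: "distinct rs" "length rs = length cs" "minor M rs cs \<noteq> 0"
    using snoc by auto
  define w where "w = coeff_vec (cs @ [c]) (last_row_cofactor M rs (cs @ [c]))"
  have "w $ c \<noteq> 0"
    using coeff_vec_nth[OF snoc.prems(1), of "length cs"] rs
    by (simp add: w_def nth_append last_row_cofactor_last)
  then have "w \<noteq> 0"
    by auto
  moreover have "w \<in> flows M" if "\<And>r. minor M (rs @ [r]) (cs @ [c]) = 0"
    using that rs(2) by (simp add: flows_def Finite_Cartesian_Product.vec_eq_iff w_def matrix_vector_mult_cofactors)
  ultimately obtain r where r: "minor M (rs @ [r]) (cs @ [c]) \<noteq> 0"
    using snoc.prems(2) supp_coeff_vec unfolding w_def by blast
  then have "r \<notin> set rs"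
    using minor_repeated_row[of r rs "cs @ [c]" M] rs(2) by auto
  then show ?case
    using rs r by (intro exI[of _ "rs @ [r]"]) auto
qed

theorem circuit_has_unimodular_flow:
  assumes TU: "totally_unimodular M" and C: "matroid_circuit M C"
  shows "\<exists>w\<in>flows M. (\<forall>e. w $ e \<in> {-1, 0, 1}) \<and> supp w = C"
proof -
  obtain z where z: "z \<in> flows M" "supp z = C"
    using circuit_has_flow[OF C] .
  obtain c where c: "c \<in> C"
    using circuit_nonempty[OF C] by blast
  obtain cs where cs: "distinct cs" "set cs = C - {c}"
    using finite_distinct_list[of "C - {c}"] by auto
  have "u = 0" if "u \<in> flows M" "supp u \<subseteq> set cs" for u
    using that cs(2) c circuit_flow_supp_eq[OF C] by blast
  then obtain rs where rs: "distinct rs" "length rs = length cs" "minor M rs cs \<noteq> 0"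
    using exists_nonsingular_minor[OF cs(1)] by blast
  define cs' where "cs' = cs @ [c]"
  have cs': "distinct cs'" "set cs' = C" "length cs' = Suc (length rs)"
    using cs c rs(2) by (auto simp: cs'_def)
  txt \<open>Expanding along a new last row r, \<open>(M *v w) $ r\<close> is a minor on the dependent columns
    of C, hence 0.\<close>
  define w where "w = coeff_vec cs' (last_row_cofactor M rs cs')"
  have "z \<noteq> 0"
    using z(2) circuit_nonempty[OF C] supp_eq_empty_iff by blast
  then have "minor M (rs @ [r]) cs' = 0" for r
    using z cs' by (intro minor_dependent_cols) auto
  then have wF: "w \<in> flows M"
    using cs'(3) by (simp add: flows_def Finite_Cartesian_Product.vec_eq_iff w_def matrix_vector_mult_cofactors)
  have "w $ e \<in> {-1, 0, 1}" for e
    unfolding w_def using last_row_cofactor_unimodular[OF TU rs(1) cs'(1,3)]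
    by (intro coeff_vec_component_in cs'(1)) auto
  moreover have "w \<noteq> 0"
  proof -
    have "w $ c = minor M rs cs"
      using coeff_vec_nth[OF cs'(1), of "length cs"] rs(2)
      by (simp add: w_def cs'_def nth_append last_row_cofactor_last)
    then show ?thesis
      using rs(3) by auto
  qed
  moreover have "supp w \<subseteq> C"
    using supp_coeff_vec cs'(2) by (auto simp: w_def)
  ultimately show ?thesis
    using wF circuit_flow_supp_eq[OF C wF] by blast
qed

lemma sgn_mult_self_pos: "(x::real) \<noteq> 0 \<Longrightarrow> 0 < sgn x * x"
  by (cases "0 < x") (auto simp: sgn_if)

definition conformal :: "real^'e::finite \<Rightarrow> real^'e \<Rightarrow> bool" where
  "conformal g y \<longleftrightarrow> supp g \<subseteq> supp y \<and> (\<forall>e\<in>supp g. sgn (g $ e) = sgn (y $ e))"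

lemma conformal_iff_mult: "conformal g y \<longleftrightarrow> supp g \<subseteq> supp y \<and> (\<forall>e. 0 \<le> g $ e * y $ e)"
proof -
  have "(a \<noteq> 0 \<longrightarrow> sgn a = sgn b) \<longleftrightarrow> 0 \<le> a * b" if "a \<noteq> 0 \<longrightarrow> b \<noteq> 0" for a b :: real
    using that by (cases a "0::real" rule: linorder_cases; cases b "0::real" rule: linorder_cases)
      (auto simp: zero_le_mult_iff)
  then show ?thesis
    unfolding conformal_def supp_def by auto
qed

lemma conformal_trans: "conformal a b \<Longrightarrow> conformal b c \<Longrightarrow> conformal a c"
  unfolding conformal_def by (auto simp: supp_def)

lemma conformal_refl: "conformal y y"
  by (simp add: conformal_def)

lemma conformal_mult_pos: "conformal g y \<Longrightarrow> e \<in> supp g \<Longrightarrow> 0 < g $ e * y $ e"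
  unfolding conformal_iff_mult supp_def
  by (metis (mono_tags) mem_Collect_eq mult_eq_0_iff order_le_less subset_iff)

lemma exists_support_reduction:
  fixes z u :: "real^'e::finite"
  assumes "supp u \<subseteq> supp z" "0 < u $ e0 * z $ e0"
  obtains t where "0 < t" "conformal (z - t *\<^sub>R u) z" "supp (z - t *\<^sub>R u) \<subset> supp z"
proof -
  define P where "P = {e. 0 < u $ e * z $ e}"
  define t where "t = Min ((\<lambda>e. z $ e / u $ e) ` P)"
  have "finite P" "e0 \<in> P"
    using assms(2) by (auto simp: P_def)
  then have "t \<in> (\<lambda>e. z $ e / u $ e) ` P" and t_le: "\<And>e. e \<in> P \<Longrightarrow> t \<le> z $ e / u $ e"
    unfolding t_def by (auto intro: Min_in Min_le)
  then obtain e1 where e1: "e1 \<in> P" "t = z $ e1 / u $ e1"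
    by blast
  have ratio_pos: "0 < z $ e / u $ e" if "e \<in> P" for e
    using that by (auto simp: P_def zero_less_mult_iff zero_less_divide_iff)
  have t_pos: "0 < t"
    using ratio_pos[OF e1(1)] e1(2) by simp
  have same_sign: "0 \<le> (z $ e - t * u $ e) * z $ e" for e
  proof (cases "e \<in> P")
    case True
    then have "t * (u $ e * z $ e) \<le> z $ e / u $ e * (u $ e * z $ e)"
      using t_le by (intro mult_right_mono) (auto simp: P_def)
    moreover have "u $ e \<noteq> 0"
      using True by (auto simp: P_def)
    ultimately show ?thesis
      by (simp add: algebra_simps)
  next
    case False
    then have "t * (u $ e * z $ e) \<le> 0"
      using t_pos by (simp add: P_def mult_nonneg_nonpos)
    then show ?thesis
      by (simp add: algebra_simps) (smt (verit) zero_le_square)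
  qed
  have supp_le: "supp (z - t *\<^sub>R u) \<subseteq> supp z"
    using assms(1) by (auto simp: supp_def)
  moreover have "e1 \<in> supp z" "e1 \<notin> supp (z - t *\<^sub>R u)"
    using e1 by (auto simp: supp_def P_def)
  ultimately show thesis
    using that t_pos same_sign by (auto simp: conformal_iff_mult algebra_simps)
qed

lemma circuit_flows_collinear:
  assumes C: "matroid_circuit M C" and "a \<in> flows M" "supp a \<subseteq> C" "b \<in> flows M" "supp b = C"
  shows "\<exists>c. a = c *\<^sub>R b"
proof -
  obtain e where e: "e \<in> C"
    using circuit_nonempty[OF C] by blast
  define c where "c = a $ e / b $ e"
  have "b $ e \<noteq> 0"
    using e assms(5) by (auto simp: supp_def)
  then have "supp (a - c *\<^sub>R b) \<subseteq> C" "e \<notin> supp (a - c *\<^sub>R b)"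
    using assms(3,5) by (auto simp: supp_def c_def)
  moreover have "a - c *\<^sub>R b \<in> flows M"
    using assms(2,4) by (simp add: flows_diff flows_scale)
  ultimately have "a - c *\<^sub>R b = 0"
    using circuit_flow_supp_eq[OF C] e by blast
  then show ?thesis
    by auto
qed

lemma circuit_conformal_lattice_circuit:
  assumes TU: "totally_unimodular M" and z: "z \<in> flows M" "matroid_circuit M (supp z)"
  shows "\<exists>g\<in>lattice_circuits M. conformal g z"
proof -
  obtain w where w: "w \<in> flows M" "\<And>e. w $ e \<in> {-1, 0, 1}" "supp w = supp z"
    using circuit_has_unimodular_flow[OF TU z(2)] by blast
  obtain c where c: "z = c *\<^sub>R w"
    using circuit_flows_collinear[OF z(2) z(1) _ w(1,3)] by blast
  define g where "g = sgn c *\<^sub>R w"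
  have g_entries: "g $ e \<in> {-1, 0, 1}" for e
    using w(2)[of e] by (auto simp: g_def sgn_if)
  have "supp g = supp z"
    using w(3) c by (auto simp: g_def supp_def sgn_0_0)
  moreover have "g \<in> flows M"
    using w(1) by (simp add: g_def flows_scale)
  moreover have "g $ e \<in> \<int>" for e
    using g_entries[of e] by auto
  ultimately have "g \<in> lattice_circuits M"
    using z(2) g_entries by (simp add: lattice_circuits_def int_flows_def)
  moreover have "conformal g z"
  proof -
    have "g $ e * z $ e = (sgn c * c) * (w $ e * w $ e)" for e
      by (simp add: c g_def algebra_simps)
    moreover have "0 \<le> sgn c * c"
      by (simp add: sgn_if)
    ultimately show ?thesis
      unfolding conformal_iff_mult using \<open>supp g = supp z\<close> by simp
  qed
  ultimately show ?thesis
    by blast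
qed

lemma circuit_if_minimal_conformal:
  assumes z: "z \<in> flows M" "z \<noteq> 0"
    and minimal: "\<And>z'. z' \<in> flows M \<Longrightarrow> z' \<noteq> 0 \<Longrightarrow> conformal z' z \<Longrightarrow> card (supp z) \<le> card (supp z')"
  shows "matroid_circuit M (supp z)"
proof -
  have "\<not> dependent_cols M D" if D: "D \<subset> supp z" for D
  proof
    assume "dependent_cols M D"
    then obtain u where u: "u \<noteq> 0" "u \<in> flows M" "supp u \<subseteq> D"
      unfolding dependent_cols_def flows_def by blast
    obtain e0 where e0: "e0 \<in> supp u"
      using u(1) supp_eq_empty_iff by blast
    define u' where "u' = sgn (u $ e0 * z $ e0) *\<^sub>R u"
    have "supp u' \<subseteq> supp z"
      using u(3) D by (auto simp: u'_def supp_def)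
    moreover have "u $ e0 * z $ e0 \<noteq> 0"
      using e0 D u(3) by (auto simp: supp_def)
    then have "0 < sgn (u $ e0 * z $ e0) * (u $ e0 * z $ e0)"
      by (rule sgn_mult_self_pos)
    then have "0 < u' $ e0 * z $ e0"
      by (simp only: u'_def vector_scaleR_component real_scaleR_def mult.assoc)
    ultimately obtain t where "0 < t"
      and t: "conformal (z - t *\<^sub>R u') z" "supp (z - t *\<^sub>R u') \<subset> supp z"
      by (rule exists_support_reduction)
    obtain e where "e \<in> supp z" "e \<notin> D"
      using D by blast
    then have "(z - t *\<^sub>R u') $ e \<noteq> 0"
      using u(3) by (auto simp: u'_def supp_def)
    then have "z - t *\<^sub>R u' \<noteq> 0"
      by auto
    moreover have "z - t *\<^sub>R u' \<in> flows M"
      using z(1) u(2) by (simp add: u'_def flows_diff flows_scale)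
    ultimately have "card (supp z) \<le> card (supp (z - t *\<^sub>R u'))"
      using t(1) by (intro minimal)
    moreover have "card (supp (z - t *\<^sub>R u')) < card (supp z)"
      using t(2) by (simp add: psubset_card_mono)
    ultimately show False
      by simp
  qed
  then show ?thesis
    using z unfolding matroid_circuit_def dependent_cols_def flows_def by blast
qed

theorem exists_conformal_circuit:
  assumes TU: "totally_unimodular M" and y: "y \<in> flows M" "y \<noteq> 0"
  shows "\<exists>g\<in>lattice_circuits M. conformal g y"
proof -
  define P where "P z \<longleftrightarrow> z \<in> flows M \<and> z \<noteq> 0 \<and> conformal z y" for z
  have "P y"
    using y by (simp add: P_def conformal_iff_mult)
  then obtain z where "P z" and z_min: "\<And>z'. P z' \<Longrightarrow> card (supp z) \<le> card (supp z')"
    using ex_has_least_nat[of P y "\<lambda>z. card (supp z)"] by blast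
  then have z: "z \<in> flows M" "z \<noteq> 0" "conformal z y"
    by (auto simp: P_def)
  then have "matroid_circuit M (supp z)"
    using z_min conformal_trans by (intro circuit_if_minimal_conformal) (auto simp: P_def)
  then show ?thesis
    using circuit_conformal_lattice_circuit[OF TU z(1)] z(3) conformal_trans by blast
qed

definition l1_norm :: "real^'e::finite \<Rightarrow> real" where
  "l1_norm x = (\<Sum>e\<in>UNIV. \<bar>x $ e\<bar>)"

lemma l1_norm_nonneg: "0 \<le> l1_norm x"
  by (simp add: l1_norm_def sum_nonneg)

definition sgn_vec :: "real^'e::finite \<Rightarrow> real^'e" where
  "sgn_vec y = (\<chi> e. sgn (y $ e))"

lemma inner_sgn_vec_le_l1_norm: "sgn_vec y \<bullet> x \<le> l1_norm x"
  unfolding inner_vec_def inner_real_def sgn_vec_def l1_norm_def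
  by (intro sum_mono) (auto simp: sgn_if)

lemma inner_sgn_vec_conformal:
  assumes "conformal g y"
  shows "sgn_vec y \<bullet> g = l1_norm g"
proof -
  have "sgn (y $ e) * g $ e = \<bar>g $ e\<bar>" for e
  proof (cases "g $ e = 0")
    case False
    then have "sgn (y $ e) = sgn (g $ e)"
      using assms by (auto simp: conformal_def supp_def)
    then show ?thesis
      by (simp add: abs_sgn mult.commute)
  qed simp
  then show ?thesis
    unfolding inner_vec_def inner_real_def sgn_vec_def l1_norm_def by simp
qed

lemma l1_norm_add_less:
  assumes "x $ e * y $ e < 0"
  shows "l1_norm (x + y) < l1_norm x + l1_norm y"
proof -
  have "\<bar>(x + y) $ e\<bar> < \<bar>x $ e\<bar> + \<bar>y $ e\<bar>"
    using assms by (auto simp: abs_if mult_less_0_iff)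
  moreover have "\<bar>(x + y) $ f\<bar> \<le> \<bar>x $ f\<bar> + \<bar>y $ f\<bar>" for f
    by (simp add: abs_triangle_ineq)
  ultimately show ?thesis
    unfolding l1_norm_def sum.distrib[symmetric] by (intro sum_strict_mono_ex1) auto
qed

lemma l1_norm_le_norm_sq:
  assumes "\<And>e. x $ e \<in> \<int>"
  shows "l1_norm x \<le> (norm x)\<^sup>2"
proof -
  have "\<bar>x $ e\<bar> * 1 \<le> \<bar>x $ e\<bar> * \<bar>x $ e\<bar>" if "x $ e \<noteq> 0" for e
    using that assms Ints_nonzero_abs_ge1 by (intro mult_left_mono) auto
  then have "\<bar>x $ e\<bar> \<le> x $ e * x $ e" for e
    by (cases "x $ e = 0") (auto simp: abs_mult_self_eq)
  then show ?thesis
    unfolding l1_norm_def power2_norm_eq_inner inner_vec_def inner_real_def by (intro sum_mono)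
qed

lemma lattice_circuit_entries: "g \<in> lattice_circuits M \<Longrightarrow> g $ e \<in> {-1, 0, 1}"
  by (simp add: lattice_circuits_def)

lemma lattice_circuit_int_flow: "g \<in> lattice_circuits M \<Longrightarrow> g \<in> int_flows M"
  by (simp add: lattice_circuits_def)

lemma lattice_circuit_flow: "g \<in> lattice_circuits M \<Longrightarrow> g \<in> flows M"
  by (simp add: lattice_circuits_def int_flows_def)

lemma lattice_circuit_supp_nonempty: "g \<in> lattice_circuits M \<Longrightarrow> supp g \<noteq> {}"
  unfolding lattice_circuits_def using circuit_nonempty by blast

lemma norm_sq_lattice_circuit:
  assumes "g \<in> lattice_circuits M"
  shows "(norm g)\<^sup>2 = l1_norm g"
proof -
  have "g $ e * g $ e = \<bar>g $ e\<bar>" for e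
    using lattice_circuit_entries[OF assms, of e] by auto
  then show ?thesis
    unfolding power2_norm_eq_inner inner_vec_def inner_real_def l1_norm_def by simp
qed

lemma finite_lattice_circuits: "finite (lattice_circuits M)"
proof -
  have "lattice_circuits M \<subseteq> vec_lambda ` (UNIV \<rightarrow>\<^sub>E {-1, 0, 1})"
  proof
    fix g
    assume "g \<in> lattice_circuits M"
    then have "vec_nth g \<in> UNIV \<rightarrow>\<^sub>E {-1, 0, 1}"
      using lattice_circuit_entries by auto
    then show "g \<in> vec_lambda ` (UNIV \<rightarrow>\<^sub>E {-1, 0, 1})"
      by (metis image_eqI vec_lambda_eta)
  qed
  then show ?thesis
    by (rule finite_subset) (intro finite_imageI finite_PiE; simp)
qed

theorem conformal_decomposition:
  assumes TU: "totally_unimodular M"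
  shows "y \<in> flows M \<Longrightarrow>
    \<exists>c. (\<forall>g. 0 \<le> c g) \<and> y = (\<Sum>g\<in>{g \<in> lattice_circuits M. conformal g y}. c g *\<^sub>R g)"
proof (induction "card (supp y)" arbitrary: y rule: less_induct)
  case less
  define S where "S y = {g \<in> lattice_circuits M. conformal g y}" for y
  have finite_S: "finite (S y)" for y
    unfolding S_def by (rule finite_subset[OF _ finite_lattice_circuits]) auto
  show ?case
  proof (cases "y = 0")
    case True
    then show ?thesis
      by (intro exI[of _ "\<lambda>_. 0"]) simp
  next
    case False
    then obtain g where g: "g \<in> S y"
      using exists_conformal_circuit[OF TU less.prems] by (auto simp: S_def)
    then obtain e0 where "e0 \<in> supp g"
      using lattice_circuit_supp_nonempty by (fastforce simp: S_def)
    have "supp g \<subseteq> supp y"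
      using g by (simp add: S_def conformal_def)
    moreover have "0 < g $ e0 * y $ e0"
      using g \<open>e0 \<in> supp g\<close> by (simp add: S_def conformal_mult_pos)
    ultimately obtain t where t: "0 < t" "conformal (y - t *\<^sub>R g) y" "supp (y - t *\<^sub>R g) \<subset> supp y"
      by (rule exists_support_reduction)
    define y' where "y' = y - t *\<^sub>R g"
    have "y' \<in> flows M"
      using less.prems g by (simp add: y'_def S_def flows_diff flows_scale lattice_circuit_flow)
    moreover have "card (supp y') < card (supp y)"
      using t(3) by (simp add: y'_def psubset_card_mono)
    ultimately obtain c' where c': "\<forall>h. 0 \<le> c' h" "y' = (\<Sum>h\<in>S y'. c' h *\<^sub>R h)"
      using less.hyps unfolding S_def by blast
    have S_sub: "S y' \<subseteq> S y"
      using t(2) conformal_trans by (auto simp: S_def y'_def)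
    define c where "c h = (if h \<in> S y' then c' h else 0) + (if h = g then t else 0)" for h
    have "(\<Sum>h\<in>S y. c h *\<^sub>R h) = (\<Sum>h\<in>S y \<inter> S y'. c' h *\<^sub>R h) + t *\<^sub>R g"
      using g finite_S
      by (simp add: c_def scaleR_add_left sum.distrib if_distrib[of "\<lambda>a. a *\<^sub>R _"]
          sum.inter_restrict cong: if_cong)
    also have "\<dots> = y"
      using S_sub c'(2) by (simp add: Int_absorb1 y'_def)
    finally show ?thesis
      using c'(1) t(1) unfolding S_def by (intro exI[of _ c]) (simp add: c_def)
  qed
qed

lemma orthogonal_if_orthogonal_conformal_circuits:
  assumes "totally_unimodular M" "y \<in> flows M"
    and "\<And>g. g \<in> lattice_circuits M \<Longrightarrow> conformal g y \<Longrightarrow> d \<bullet> g = 0"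
  shows "d \<bullet> y = 0"
proof -
  define S where "S = {g \<in> lattice_circuits M. conformal g y}"
  obtain c where c: "y = (\<Sum>g\<in>S. c g *\<^sub>R g)"
    using conformal_decomposition[OF assms(1,2)] unfolding S_def by blast
  have "d \<bullet> y = (\<Sum>g\<in>S. c g * (d \<bullet> g))"
    by (subst c) (simp add: inner_sum_right)
  also have "\<dots> = 0"
    using assms(3) by (simp add: S_def)
  finally show ?thesis .
qed

lemma inner_le_l1_norm_if_circuits:
  assumes "totally_unimodular M" "y \<in> flows M"
    and "\<And>g. g \<in> lattice_circuits M \<Longrightarrow> 2 * (x \<bullet> g) \<le> l1_norm g"
  shows "2 * (x \<bullet> y) \<le> l1_norm y"
proof -
  define S where "S = {g \<in> lattice_circuits M. conformal g y}"
  obtain c where c: "\<And>g. 0 \<le> c g" "y = (\<Sum>g\<in>S. c g *\<^sub>R g)"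
    using conformal_decomposition[OF assms(1,2)] unfolding S_def by blast
  have "2 * (x \<bullet> y) = (\<Sum>g\<in>S. c g * (2 * (x \<bullet> g)))"
    by (subst c(2)) (simp add: inner_sum_right sum_distrib_left mult_ac)
  also have "\<dots> \<le> (\<Sum>g\<in>S. c g * l1_norm g)"
    using assms(3) c(1) by (intro sum_mono mult_left_mono) (auto simp: S_def)
  also have "\<dots> = sgn_vec y \<bullet> y"
    by (subst (2) c(2)) (simp add: inner_sum_right S_def inner_sgn_vec_conformal)
  also have "\<dots> = l1_norm y"
    by (rule inner_sgn_vec_conformal[OF conformal_refl])
  finally show ?thesis .
qed

lemma voronoi0_iff_norm:
  "x \<in> voronoi0 M \<longleftrightarrow> x \<in> flows M \<and> (\<forall>l\<in>int_flows M. 2 * (x \<bullet> l) \<le> (norm l)\<^sup>2)"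
proof -
  have "norm x \<le> norm (x - l) \<longleftrightarrow> 2 * (x \<bullet> l) \<le> (norm l)\<^sup>2" for l
    by (simp add: norm_le power2_norm_eq_inner inner_diff_left inner_diff_right inner_commute)
  then show ?thesis
    unfolding voronoi0_def by auto
qed

theorem voronoi0_iff_circuits:
  assumes "totally_unimodular M"
  shows "x \<in> voronoi0 M \<longleftrightarrow>
    x \<in> flows M \<and> (\<forall>g\<in>lattice_circuits M. 2 * (x \<bullet> g) \<le> l1_norm g)"
proof -
  have "2 * (x \<bullet> l) \<le> (norm l)\<^sup>2"
    if "\<forall>g\<in>lattice_circuits M. 2 * (x \<bullet> g) \<le> l1_norm g" "l \<in> int_flows M" for l
    using inner_le_l1_norm_if_circuits[OF assms] l1_norm_le_norm_sq[of l] that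
    by (fastforce simp: int_flows_def)
  then show ?thesis
    unfolding voronoi0_iff_norm
    by (metis lattice_circuit_int_flow norm_sq_lattice_circuit)
qed

lemma voronoi0_inner_le_l1_norm:
  "totally_unimodular M \<Longrightarrow> x \<in> voronoi0 M \<Longrightarrow> y \<in> flows M \<Longrightarrow> 2 * (x \<bullet> y) \<le> l1_norm y"
  by (meson inner_le_l1_norm_if_circuits voronoi0_iff_circuits)

lemma supp_add: "supp (x + y) \<subseteq> supp x \<union> supp y"
  by (auto simp: supp_def)

lemma supp_scaleR: "supp (c *\<^sub>R x) \<subseteq> supp x"
  by (auto simp: supp_def)

lemma subspace_flows_supported: "subspace {x \<in> flows M. supp x \<subseteq> S}"
  unfolding subspace_def
  using subspace_0[OF subspace_flows] flows_add flows_scale supp_add supp_scaleR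
  by (auto simp: supp_def) blast+

lemma genus_flow_eq_genus_matroid_iff:
  "genus_flow M \<mu> = genus_matroid M \<longleftrightarrow> (\<forall>y\<in>flows M. supp y \<subseteq> supp \<mu>)"
proof
  assume "genus_flow M \<mu> = genus_matroid M"
  then have "{x \<in> flows M. supp x \<subseteq> supp \<mu>} = flows M"
    unfolding genus_flow_def genus_matroid_def
    by (intro subspace_dim_equal subspace_flows_supported subspace_flows) auto
  then show "\<forall>y\<in>flows M. supp y \<subseteq> supp \<mu>"
    by blast
next
  assume "\<forall>y\<in>flows M. supp y \<subseteq> supp \<mu>"
  then have "{x \<in> flows M. supp x \<subseteq> supp \<mu>} = flows M"
    by blast
  then show "genus_flow M \<mu> = genus_matroid M"
    by (simp add: genus_flow_def genus_matroid_def)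
qed

lemma face_flow_iff:
  "x \<in> face_flow M \<mu> \<longleftrightarrow>
     x \<in> flows M \<and> (\<forall>g\<in>lattice_circuits M. conformal g \<mu> \<longrightarrow> 2 * (x \<bullet> g) = l1_norm g)"
proof -
  have "x \<in> face_flow M \<mu> \<longleftrightarrow>
     x \<in> flows M \<and> (\<forall>g\<in>lattice_circuits M. conformal g \<mu> \<longrightarrow> 2 * (x \<bullet> g) = (norm g)\<^sup>2)"
    unfolding face_flow_def face_circ_def conformal_def by blast
  then show ?thesis
    by (auto simp: norm_sq_lattice_circuit)
qed

lemma exists_flow_representative: "\<exists>x\<in>flows M. \<forall>y\<in>flows M. x \<bullet> y = w \<bullet> y"
proof -
  obtain x q where "x \<in> span (flows M)" "\<And>y. y \<in> span (flows M) \<Longrightarrow> real_inner_class.orthogonal q y" "w = x + q"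
    using orthogonal_subspace_decomp_exists[of "flows M" w] by blast
  moreover have "span (flows M) = flows M"
    by (simp add: span_eq_iff subspace_flows)
  ultimately show ?thesis
    by (auto simp: real_inner_class.orthogonal_def inner_add_left)
qed

lemma conformal_add_if_abs_less:
  assumes "supp d \<subseteq> supp y" "\<And>e. e \<in> supp y \<Longrightarrow> \<bar>d $ e\<bar> < \<bar>y $ e\<bar>"
  shows "conformal (y + d) y"
  unfolding conformal_iff_mult
proof (intro conjI allI)
  show "supp (y + d) \<subseteq> supp y"
    using assms(1) supp_add by blast
  fix e
  show "0 \<le> (y + d) $ e * y $ e"
  proof (cases "e \<in> supp y")
    case True
    have "\<bar>d $ e\<bar> * \<bar>y $ e\<bar> \<le> \<bar>y $ e\<bar> * \<bar>y $ e\<bar>"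
      using assms(2)[OF True] by (intro mult_right_mono) auto
    then have "- (d $ e * y $ e) \<le> y $ e * y $ e"
      by (metis abs_ge_minus_self abs_mult abs_mult_self_eq order_trans)
    then show ?thesis
      by (simp add: algebra_simps)
  qed (simp add: supp_def)
qed

lemma face_flow_voronoi0_point:
  obtains x where "x \<in> face_flow M \<mu>" "x \<in> voronoi0 M"
proof -
  obtain x where x: "x \<in> flows M" "\<forall>y\<in>flows M. x \<bullet> y = ((1 / 2) *\<^sub>R sgn_vec \<mu>) \<bullet> y"
    using exists_flow_representative by blast
  have x_inner: "2 * (x \<bullet> y) = sgn_vec \<mu> \<bullet> y" if "y \<in> flows M" for y
    using x(2) that by (simp add: mult.commute)
  have "2 * (x \<bullet> g) = l1_norm g" if "g \<in> lattice_circuits M" "conformal g \<mu>" for g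
    using x_inner[OF lattice_circuit_flow[OF that(1)]] inner_sgn_vec_conformal[OF that(2)] by simp
  then have "x \<in> face_flow M \<mu>"
    using x(1) by (simp add: face_flow_iff)
  moreover have "x \<in> voronoi0 M"
    unfolding voronoi0_iff_norm
  proof (intro conjI ballI)
    fix l
    assume "l \<in> int_flows M"
    then have "2 * (x \<bullet> l) \<le> l1_norm l" "l1_norm l \<le> (norm l)\<^sup>2"
      using x_inner inner_sgn_vec_le_l1_norm l1_norm_le_norm_sq by (auto simp: int_flows_def)
    then show "2 * (x \<bullet> l) \<le> (norm l)\<^sup>2"
      by linarith
  qed (fact x(1))
  ultimately show thesis
    using that by blast
qed

lemma flow_eq_0_if_orthogonal_conformal_circuits:
  assumes TU: "totally_unimodular M" and \<mu>: "\<mu> \<in> int_flows M"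
    and genus: "genus_flow M \<mu> = genus_matroid M"
    and d: "d \<in> flows M" "\<And>g. g \<in> lattice_circuits M \<Longrightarrow> conformal g \<mu> \<Longrightarrow> d \<bullet> g = 0"
  shows "d = 0"
proof -
  have \<mu>F: "\<mu> \<in> flows M"
    using \<mu> by (simp add: int_flows_def)
  define N where "N = l1_norm d + 1"
  define y where "y = N *\<^sub>R \<mu> + d"
  have N_pos: "0 < N"
    using l1_norm_nonneg[of d] by (simp add: N_def)
  have supp_N\<mu>: "supp (N *\<^sub>R \<mu>) = supp \<mu>"
    using N_pos by (auto simp: supp_def)
  have "\<bar>d $ e\<bar> < N * \<bar>\<mu> $ e\<bar>" if "e \<in> supp \<mu>" for e
  proof -
    have "\<bar>d $ e\<bar> \<le> l1_norm d"
      unfolding l1_norm_def by (rule member_le_sum) auto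
    then have "\<bar>d $ e\<bar> < N * 1"
      by (simp add: N_def)
    also have "\<dots> \<le> N * \<bar>\<mu> $ e\<bar>"
      using that \<mu> Ints_nonzero_abs_ge1 N_pos
      by (intro mult_left_mono) (auto simp: supp_def int_flows_def)
    finally show ?thesis .
  qed
  moreover have "supp d \<subseteq> supp \<mu>"
    using d(1) genus genus_flow_eq_genus_matroid_iff by blast
  ultimately have "conformal y (N *\<^sub>R \<mu>)"
    unfolding y_def using N_pos
    by (intro conformal_add_if_abs_less) (auto simp: supp_N\<mu> abs_mult)
  moreover have "conformal (N *\<^sub>R \<mu>) \<mu>"
    using N_pos by (auto simp: conformal_iff_mult supp_N\<mu> mult.assoc intro!: mult_nonneg_nonneg)
  ultimately have "conformal g \<mu>" if "conformal g y" for g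
    using that conformal_trans by blast
  moreover have "y \<in> flows M"
    by (simp add: y_def flows_add flows_scale \<mu>F d(1))
  ultimately have "d \<bullet> y = 0"
    using d(2) orthogonal_if_orthogonal_conformal_circuits[OF TU] by blast
  moreover have "d \<bullet> \<mu> = 0"
    using orthogonal_if_orthogonal_conformal_circuits[OF TU \<mu>F d(2)] .
  ultimately have "d \<bullet> d = 0"
    by (simp add: y_def inner_add_right)
  then show ?thesis
    by simp
qed

lemma face_flow_subsingleton:
  assumes TU: "totally_unimodular M" and \<mu>: "\<mu> \<in> int_flows M"
    and genus: "genus_flow M \<mu> = genus_matroid M"
    and x: "x \<in> face_flow M \<mu>" and x': "x' \<in> face_flow M \<mu>"
  shows "x = x'"
proof -
  have "x' - x \<in> flows M"
    using x x' by (simp add: face_flow_iff flows_diff)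
  moreover have "(x' - x) \<bullet> g = 0" if "g \<in> lattice_circuits M" "conformal g \<mu>" for g
  proof -
    have "2 * (x \<bullet> g) = l1_norm g" "2 * (x' \<bullet> g) = l1_norm g"
      using x x' that by (auto simp: face_flow_iff)
    then show ?thesis
      by (simp add: inner_diff_left)
  qed
  ultimately have "x' - x = 0"
    by (rule flow_eq_0_if_orthogonal_conformal_circuits[OF TU \<mu> genus])
  then show ?thesis
    by simp
qed

lemma extreme_point_if_face_flow_singleton:
  assumes face: "face_flow M \<mu> = {x}" and x: "x \<in> voronoi0 M"
  shows "x extreme_point_of voronoi0 M"
  unfolding extreme_point_of_def
proof (intro conjI ballI notI)
  fix a b
  assume a: "a \<in> voronoi0 M" and b: "b \<in> voronoi0 M" and x_ab: "x \<in> open_segment a b"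
  then obtain u where u: "0 < u" "u < 1" "x = (1 - u) *\<^sub>R a + u *\<^sub>R b"
    by (auto simp: in_segment)
  have "a \<noteq> x"
    using x_ab by (auto simp: open_segment_def)
  have "a \<in> face_flow M \<mu>"
    unfolding face_flow_iff
  proof (intro conjI ballI impI)
    show "a \<in> flows M"
      using a by (simp add: voronoi0_def)
    fix g
    assume g: "g \<in> lattice_circuits M" "conformal g \<mu>"
    define slack where "slack z = l1_norm g - 2 * (z \<bullet> g)" for z
    have "0 \<le> slack a" "0 \<le> slack b"
      using a b g(1) voronoi0_iff_norm lattice_circuit_int_flow norm_sq_lattice_circuit
      unfolding slack_def by (metis diff_ge_0_iff_ge)+
    moreover have "slack x = 0"
      using face_flow_iff[of x M \<mu>] face g by (auto simp: slack_def)
    moreover have "slack x = (1 - u) * slack a + u * slack b"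
      by (simp add: slack_def u(3) inner_add_left algebra_simps)
    ultimately have "(1 - u) * slack a = 0"
      using u(1,2) by (simp add: add_nonneg_eq_0_iff)
    then show "2 * (a \<bullet> g) = l1_norm g"
      using u(2) by (simp add: slack_def)
  qed
  then show False
    using face \<open>a \<noteq> x\<close> by blast
qed (fact x)

theorem face_flow_full_genus:
  assumes "totally_unimodular M" "\<mu> \<in> int_flows M" "genus_flow M \<mu> = genus_matroid M"
  shows "\<exists>v. face_flow M \<mu> = {v} \<and> v extreme_point_of voronoi0 M"
proof -
  obtain v where "v \<in> face_flow M \<mu>" "v \<in> voronoi0 M"
    by (rule face_flow_voronoi0_point)
  moreover from this(1) have "face_flow M \<mu> = {v}"
    using face_flow_subsingleton[OF assms] by blast
  ultimately show ?thesis
    using extreme_point_if_face_flow_singleton by blast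
qed

definition tight_circuits :: "real^'e::finite^'r::finite \<Rightarrow> real^'e \<Rightarrow> (real^'e) set" where
  "tight_circuits M v = {g \<in> lattice_circuits M. 2 * (v \<bullet> g) = l1_norm g}"

lemma tight_circuits_sign_compatible:
  assumes TU: "totally_unimodular M" and v: "v \<in> voronoi0 M"
    and g: "g \<in> tight_circuits M v" and h: "h \<in> tight_circuits M v"
  shows "0 \<le> g $ e * h $ e"
proof (rule ccontr)
  assume "\<not> 0 \<le> g $ e * h $ e"
  then have "l1_norm (g + h) < l1_norm g + l1_norm h"
    by (intro l1_norm_add_less[where e = e]) simp
  also have "\<dots> = 2 * (v \<bullet> (g + h))"
    using g h by (simp add: tight_circuits_def inner_add_right)
  also have "\<dots> \<le> l1_norm (g + h)"
    using g h by (intro voronoi0_inner_le_l1_norm[OF TU v] flows_add lattice_circuit_flow)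
      (auto simp: tight_circuits_def)
  finally show False
    by simp
qed

lemma voronoi0_feasible_direction:
  assumes TU: "totally_unimodular M" and v: "v \<in> voronoi0 M"
    and d: "d \<in> flows M" "\<And>g. g \<in> tight_circuits M v \<Longrightarrow> d \<bullet> g = 0"
  obtains \<epsilon> :: real where "0 < \<epsilon>" "\<And>t. \<bar>t\<bar> < \<epsilon> \<Longrightarrow> v + t *\<^sub>R d \<in> voronoi0 M"
proof -
  define NT where "NT = lattice_circuits M - tight_circuits M v"
  have slack: "2 * (v \<bullet> g) < l1_norm g" if "g \<in> NT" for g
    using that v by (auto simp: NT_def tight_circuits_def voronoi0_iff_circuits[OF TU] order_le_less)
  have "\<forall>\<^sub>F t in at (0::real). \<forall>g\<in>NT. 2 * ((v + t *\<^sub>R d) \<bullet> g) < l1_norm g"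
  proof (intro eventually_ball_finite ballI)
    show "finite NT"
      unfolding NT_def by (rule finite_Diff[OF finite_lattice_circuits])
    fix g
    assume "g \<in> NT"
    have "((\<lambda>t. 2 * (v \<bullet> g) + t * (2 * (d \<bullet> g))) \<longlongrightarrow> 2 * (v \<bullet> g) + 0 * (2 * (d \<bullet> g))) (at 0)"
      by (intro tendsto_intros)
    then have "\<forall>\<^sub>F t in at 0. 2 * (v \<bullet> g) + t * (2 * (d \<bullet> g)) < l1_norm g"
      using slack[OF \<open>g \<in> NT\<close>] by (intro order_tendstoD(2)) simp_all
    then show "\<forall>\<^sub>F t in at 0. 2 * ((v + t *\<^sub>R d) \<bullet> g) < l1_norm g"
      by (simp add: inner_add_left algebra_simps)
  qed
  then obtain \<epsilon> :: real where \<epsilon>: "0 < \<epsilon>"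
    and small: "\<And>t. t \<noteq> 0 \<Longrightarrow> \<bar>t\<bar> < \<epsilon> \<Longrightarrow> \<forall>g\<in>NT. 2 * ((v + t *\<^sub>R d) \<bullet> g) < l1_norm g"
    by (auto simp: eventually_at dist_real_def)
  have "v + t *\<^sub>R d \<in> voronoi0 M" if "\<bar>t\<bar> < \<epsilon>" for t
  proof (cases "t = 0")
    case False
    show ?thesis
      unfolding voronoi0_iff_circuits[OF TU]
    proof (intro conjI ballI)
      show "v + t *\<^sub>R d \<in> flows M"
        using v d(1) by (simp add: voronoi0_def flows_add flows_scale)
      fix g
      assume "g \<in> lattice_circuits M"
      then show "2 * ((v + t *\<^sub>R d) \<bullet> g) \<le> l1_norm g"
        using small[OF False that] d(2)[of g] by (cases "g \<in> tight_circuits M v")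
          (auto simp: NT_def tight_circuits_def inner_add_left less_imp_le)
    qed
  qed (simp add: v)
  with \<epsilon> show thesis
    using that by blast
qed

lemma flow_eq_0_if_orthogonal_tight_circuits:
  assumes TU: "totally_unimodular M" and v: "v extreme_point_of voronoi0 M"
    and d: "d \<in> flows M" "\<And>g. g \<in> tight_circuits M v \<Longrightarrow> d \<bullet> g = 0"
  shows "d = 0"
proof (rule ccontr)
  assume "d \<noteq> 0"
  have "v \<in> voronoi0 M"
    using v by (simp add: extreme_point_of_def)
  then obtain \<epsilon> :: real where \<epsilon>: "0 < \<epsilon>" "\<And>t. \<bar>t\<bar> < \<epsilon> \<Longrightarrow> v + t *\<^sub>R d \<in> voronoi0 M"
    using voronoi0_feasible_direction[OF TU _ d] by blast
  define a where "a = v - (\<epsilon> / 2) *\<^sub>R d"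
  define b where "b = v + (\<epsilon> / 2) *\<^sub>R d"
  have "a \<noteq> b"
  proof
    assume "a = b"
    then have "\<epsilon> *\<^sub>R d = 0"
      unfolding Finite_Cartesian_Product.vec_eq_iff by (simp add: a_def b_def field_simps)
    then show False
      using \<epsilon> \<open>d \<noteq> 0\<close> by simp
  qed
  moreover have "midpoint a b = v"
    unfolding midpoint_def Finite_Cartesian_Product.vec_eq_iff by (simp add: a_def b_def field_simps)
  ultimately have "v \<in> open_segment a b"
    using midpoint_in_open_segment[of a b] by simp
  moreover have "a \<in> voronoi0 M" "b \<in> voronoi0 M"
    using \<epsilon>(2)[of "- \<epsilon> / 2"] \<epsilon>(2)[of "\<epsilon> / 2"] \<epsilon>(1) by (simp_all add: a_def b_def)
  ultimately show False
    using v by (auto simp: extreme_point_of_def)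
qed

lemma conformal_sum_if_sign_compatible:
  assumes "finite T" "\<And>g h e. g \<in> T \<Longrightarrow> h \<in> T \<Longrightarrow> 0 \<le> g $ e * h $ e" "g \<in> T"
  shows "conformal g (\<Sum>T)"
proof -
  have square_le: "g $ e * g $ e \<le> g $ e * (\<Sum>T) $ e" for e
  proof -
    have "g $ e * g $ e \<le> (\<Sum>h\<in>T. g $ e * h $ e)"
      using assms by (intro member_le_sum) auto
    then show ?thesis
      by (simp add: sum_distrib_left)
  qed
  show ?thesis
    unfolding conformal_iff_mult
  proof (intro conjI allI subsetI)
    fix e
    assume "e \<in> supp g"
    then have "0 < g $ e * g $ e"
      by (metis mem_Collect_eq not_real_square_gt_zero supp_def)
    then show "e \<in> supp (\<Sum>T)"
      using square_le[of e] by (auto simp: supp_def)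
  next
    fix e
    show "0 \<le> g $ e * (\<Sum>T) $ e"
      using square_le[of e] zero_le_square[of "g $ e"] by linarith
  qed
qed

lemma l1_norm_diff_conformal:
  assumes "conformal g y" "\<And>e. \<bar>g $ e\<bar> \<le> \<bar>y $ e\<bar>"
  shows "l1_norm (y - g) = l1_norm y - l1_norm g"
proof -
  have "\<bar>y $ e - g $ e\<bar> = \<bar>y $ e\<bar> - \<bar>g $ e\<bar>" for e
  proof -
    have "0 \<le> g $ e * y $ e"
      using assms(1) by (simp add: conformal_iff_mult)
    then show ?thesis
      using assms(2)[of e] by (cases "0 \<le> g $ e"; cases "0 \<le> y $ e") (auto simp: zero_le_mult_iff)
  qed
  then show ?thesis
    unfolding l1_norm_def by (simp add: sum_subtractf)
qed

lemma tight_if_conformal: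
  assumes TU: "totally_unimodular M" and v: "v \<in> voronoi0 M"
    and \<mu>: "\<mu> \<in> int_flows M" "2 * (v \<bullet> \<mu>) = l1_norm \<mu>"
    and g: "g \<in> lattice_circuits M" "conformal g \<mu>"
  shows "g \<in> tight_circuits M v"
proof -
  have "\<bar>g $ e\<bar> \<le> \<bar>\<mu> $ e\<bar>" for e
  proof (cases "g $ e = 0")
    case False
    then have "\<mu> $ e \<noteq> 0"
      using g(2) by (auto simp: conformal_def supp_def)
    moreover have "\<mu> $ e \<in> \<int>"
      using \<mu>(1) by (simp add: int_flows_def)
    ultimately have "1 \<le> \<bar>\<mu> $ e\<bar>"
      by (rule Ints_nonzero_abs_ge1[rotated])
    then show ?thesis
      using lattice_circuit_entries[OF g(1), of e] by auto
  qed simp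
  then have "l1_norm (\<mu> - g) = l1_norm \<mu> - l1_norm g"
    by (rule l1_norm_diff_conformal[OF g(2)])
  moreover have "\<mu> - g \<in> flows M"
    using \<mu>(1) g(1) by (simp add: int_flows_def flows_diff lattice_circuit_flow)
  then have "2 * (v \<bullet> (\<mu> - g)) \<le> l1_norm (\<mu> - g)"
    by (rule voronoi0_inner_le_l1_norm[OF TU v])
  ultimately have "l1_norm g \<le> 2 * (v \<bullet> g)"
    using \<mu>(2) by (simp add: inner_diff_right)
  moreover have "2 * (v \<bullet> g) \<le> l1_norm g"
    using v g(1) voronoi0_iff_circuits[OF TU] by blast
  ultimately show ?thesis
    using g(1) by (simp add: tight_circuits_def)
qed

lemma flow_component_eq_0:
  assumes "T \<subseteq> flows M" "\<And>d. d \<in> flows M \<Longrightarrow> (\<And>g. g \<in> T \<Longrightarrow> d \<bullet> g = 0) \<Longrightarrow> d = 0"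
    and "\<And>g. g \<in> T \<Longrightarrow> g $ e = 0" "y \<in> flows M"
  shows "y $ e = 0"
proof -
  obtain p where p: "p \<in> flows M" "\<forall>w\<in>flows M. p \<bullet> w = axis e 1 \<bullet> w"
    using exists_flow_representative by blast
  then have "p = 0"
    using assms(1,3) by (intro assms(2)) (auto simp: inner_axis')
  then show ?thesis
    using p(2) assms(4) by (simp add: inner_axis')
qed

lemma sum_int_flows: "T \<subseteq> int_flows M \<Longrightarrow> \<Sum>T \<in> int_flows M"
  unfolding int_flows_def
  by (auto intro!: subspace_sum[OF subspace_flows] Ints_sum simp: sum_component)

lemma tight_sum_if_conformal:
  assumes "finite T" "\<And>g. g \<in> T \<Longrightarrow> conformal g (\<Sum>T)"
    and "\<And>g. g \<in> T \<Longrightarrow> 2 * (v \<bullet> g) = l1_norm g"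
  shows "2 * (v \<bullet> \<Sum>T) = l1_norm (\<Sum>T)"
proof -
  have "2 * (v \<bullet> \<Sum>T) = (\<Sum>g\<in>T. 2 * (v \<bullet> g))"
    by (simp add: inner_sum_right sum_distrib_left)
  also have "\<dots> = (\<Sum>g\<in>T. sgn_vec (\<Sum>T) \<bullet> g)"
    using assms(2,3) by (intro sum.cong) (simp_all add: inner_sgn_vec_conformal)
  also have "\<dots> = sgn_vec (\<Sum>T) \<bullet> \<Sum>T"
    by (simp add: inner_sum_right)
  also have "\<dots> = l1_norm (\<Sum>T)"
    by (rule inner_sgn_vec_conformal[OF conformal_refl])
  finally show ?thesis .
qed

theorem extreme_point_face_flow:
  assumes TU: "totally_unimodular M" and v: "v extreme_point_of voronoi0 M"
  shows "\<exists>\<mu>\<in>int_flows M. genus_flow M \<mu> = genus_matroid M \<and> face_flow M \<mu> = {v}"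
proof -
  have vV: "v \<in> voronoi0 M"
    using v by (simp add: extreme_point_of_def)
  define T where "T = tight_circuits M v"
  have T_sub: "T \<subseteq> lattice_circuits M"
    by (auto simp: T_def tight_circuits_def)
  then have "finite T"
    using finite_lattice_circuits by (rule finite_subset)
  define \<mu> where "\<mu> = \<Sum>T"
  have T_conformal: "conformal g \<mu>" if "g \<in> T" for g
    unfolding \<mu>_def using \<open>finite T\<close> tight_circuits_sign_compatible[OF TU vV] that
    by (intro conformal_sum_if_sign_compatible) (auto simp: T_def)
  have \<mu>_int: "\<mu> \<in> int_flows M"
    unfolding \<mu>_def using T_sub lattice_circuit_int_flow by (intro sum_int_flows) blast
  have "2 * (v \<bullet> \<mu>) = l1_norm \<mu>"
    unfolding \<mu>_def using \<open>finite T\<close> T_conformal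
    by (intro tight_sum_if_conformal) (auto simp: \<mu>_def T_def tight_circuits_def)
  then have "v \<in> face_flow M \<mu>"
    using vV tight_if_conformal[OF TU vV \<mu>_int]
    by (auto simp: face_flow_iff voronoi0_def tight_circuits_def)
  moreover have "genus_flow M \<mu> = genus_matroid M"
    unfolding genus_flow_eq_genus_matroid_iff
  proof (intro ballI subsetI, rule ccontr)
    fix y e
    assume y: "y \<in> flows M" "e \<in> supp y" and "e \<notin> supp \<mu>"
    then have "g $ e = 0" if "g \<in> T" for g
      using T_conformal[OF that] by (auto simp: conformal_def supp_def)
    moreover have "T \<subseteq> flows M"
      using T_sub lattice_circuit_flow by blast
    ultimately have "y $ e = 0"
      using flow_component_eq_0 flow_eq_0_if_orthogonal_tight_circuits[OF TU v, folded T_def] y(1)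
      by blast
    then show False
      using y(2) by (simp add: supp_def)
  qed
  ultimately show ?thesis
    using face_flow_subsingleton[OF TU \<mu>_int] \<mu>_int by blast
qed

theorem mainTheorem16:
  fixes M :: "real^'e::finite^'r::finite"
  assumes "totally_unimodular M"
  shows "(\<forall>\<mu>\<in>int_flows M. genus_flow M \<mu> = genus_matroid M \<longrightarrow>
            (\<exists>v. face_flow M \<mu> = {v} \<and> v extreme_point_of voronoi0 M))
       \<and> (\<forall>v. v extreme_point_of voronoi0 M \<longrightarrow>
            (\<exists>\<mu>\<in>int_flows M. genus_flow M \<mu> = genus_matroid M \<and> face_flow M \<mu> = {v}))"
  using face_flow_full_genus[OF assms] extreme_point_face_flow[OF assms] by blast

end
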